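(* For $n\ge 2$ let $X^n$ be the continuous-time Markov chain on $V_n=\{v_0,\dots,v_{2n}\}$, $A=v_0$, $B=v_n$, $C=v_{2n}$, with nonzero jump rates $q(v_i,v_{i+1})=1$ for $0\le i\le 2n-1$, $i\neq n$; $q(B,v_{n+1})=1/n$, $q(B,C)=1-1/n$; $q(v_{i+1},v_i)=2^{-n^2}$ for $0\le i\le 2n-1$; $q(C,B)=(n-1)2^{-n^3}$. Let $P^n_t$ be its semigroup and $\pi_n$ its reversible stationary distribution. Then for all $n$ sufficiently large, for all $x,y\in V_n\setminus\{C\}$ and all $t$ with $n/2\le t\le 3n$, \[ P^n_t(x,y)\ge \pi_n(y). \]
   Context: The graph underlying $X^n$ is a path $v_0\cdots v_{2n}$ plus an extra edge $B$–$C$; transitions occur only along edges with the given rates. *)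

theory Defs
  imports Complex_Main
begin

text \<open>States v_0,...,v_{2n} are encoded as naturals 0..2n; A = 0, B = n, C = 2n.\<close>

definition states :: "nat \<Rightarrow> nat set" where
  "states n = {0..2*n}"

definition rate :: "nat \<Rightarrow> nat \<Rightarrow> nat \<Rightarrow> real" where
  "rate n i j =
     (if i \<le> 2*n \<and> j \<le> 2*n \<and> i \<noteq> j then
        (if j = i + 1 \<and> i \<noteq> n then 1
         else if i = n \<and> j = n + 1 then 1 / real n
         else if i = n \<and> j = 2*n then 1 - 1 / real n
         else if i = j + 1 then inverse (2 ^ (n^2))
         else if i = 2*n \<and> j = n then (real n - 1) * inverse (2 ^ (n^3))
         else 0)
      else 0)"

definition gen :: "nat \<Rightarrow> nat \<Rightarrow> nat \<Rightarrow> real" where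
  "gen n i j = (if i = j then - (\<Sum>k\<in>states n - {i}. rate n i k) else rate n i j)"

fun gen_pow :: "nat \<Rightarrow> nat \<Rightarrow> nat \<Rightarrow> nat \<Rightarrow> real" where
  "gen_pow n 0 i j = (if i = j then 1 else 0)"
| "gen_pow n (Suc k) i j = (\<Sum>l\<in>states n. gen_pow n k i l * gen n l j)"

definition trans_semigroup :: "nat \<Rightarrow> real \<Rightarrow> nat \<Rightarrow> nat \<Rightarrow> real" where
  "trans_semigroup n t i j = (\<Sum>k. t ^ k / fact k * gen_pow n k i j)"

definition stat_dist :: "nat \<Rightarrow> nat \<Rightarrow> real" where
  "stat_dist n = (THE p. (\<forall>i. i \<notin> states n \<longrightarrow> p i = 0)
                      \<and> (\<forall>i\<in>states n. p i \<ge> 0)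
                      \<and> (\<Sum>i\<in>states n. p i) = 1
                      \<and> (\<forall>j\<in>states n. (\<Sum>i\<in>states n. p i * gen n i j) = 0)
                      \<and> (\<forall>i\<in>states n. \<forall>j\<in>states n. p i * rate n i j = p j * rate n j i))"

end

theory Submission
  imports Defs
begin

(* Every exit rate is at most 2, so Q + 2I is a nonnegative matrix and
   P_t = e^(-2t) exp (t (Q + 2I)) >= e^(-2t) t^(2n) / (2n)! (Q + 2I)^(2n).
   For x, y <> C a single path of length 2n bounds the last entry from below: walk from x to y
   along the line (the forward steps cost a factor 1/n at worst, each backward step 2^(-n^2)),
   then idle at y (each idle step costs 1/2).  Detailed balance gives pi(y) <= n 2^(-n^2 (2n - y)),
   whereas the path uses at most 2n - 1 - y backward steps; the spare factor 2^(-n^2) absorbs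
   n^2 4^n e^(2t) (2n)! / t^(2n) = 2^O(n log n) for n/2 <= t <= 3n. *)

fun mat_pow :: "'a set \<Rightarrow> ('a \<Rightarrow> 'a \<Rightarrow> real) \<Rightarrow> nat \<Rightarrow> 'a \<Rightarrow> 'a \<Rightarrow> real" where
  "mat_pow S A 0 i j = (if i = j then 1 else 0)"
| "mat_pow S A (Suc k) i j = (\<Sum>l\<in>S. mat_pow S A k i l * A l j)"

lemma gen_pow_eq_mat_pow: "gen_pow n k i j = mat_pow (states n) (gen n) k i j"
  by (induction k arbitrary: j) simp_all

lemma mat_pow_add:
  assumes "finite S" "j \<in> S"
  shows "mat_pow S A (k + m) i j = (\<Sum>l\<in>S. mat_pow S A k i l * mat_pow S A m l j)"
  using assms(2)
proof (induction m arbitrary: j)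
  case 0
  then show ?case using assms(1) by (simp add: if_distrib cong: if_cong)
next
  case (Suc m)
  have "mat_pow S A (k + Suc m) i j = (\<Sum>p\<in>S. \<Sum>l\<in>S. mat_pow S A k i l * mat_pow S A m l p * A p j)"
    using Suc.IH by (simp add: sum_distrib_right mult.assoc)
  also have "\<dots> = (\<Sum>l\<in>S. mat_pow S A k i l * mat_pow S A (Suc m) l j)"
    by (subst sum.swap) (simp add: sum_distrib_left mult.assoc)
  finally show ?case .
qed

lemma mat_pow_nonneg:
  assumes "\<And>i j. i \<in> S \<Longrightarrow> 0 \<le> A i j"
  shows "0 \<le> mat_pow S A k i j"
  by (induction k arbitrary: j) (auto intro!: sum_nonneg mult_nonneg_nonneg assms)

lemma mat_pow_le:
  assumes "finite S" "\<And>i j. i \<in> S \<Longrightarrow> 0 \<le> A i j" "\<And>i j. i \<in> S \<Longrightarrow> A i j \<le> b"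
  shows "mat_pow S A k i j \<le> (real (card S) * b) ^ k"
proof (induction k arbitrary: j)
  case 0
  then show ?case by simp
next
  case (Suc k)
  have "mat_pow S A (Suc k) i j \<le> (\<Sum>l\<in>S. (real (card S) * b) ^ k * b)"
    unfolding mat_pow.simps
    using order_trans[OF assms(2,3)]
    by (intro sum_mono mult_mono Suc.IH assms(3) mat_pow_nonneg assms(2)) auto
  also have "\<dots> = (card S * b) ^ Suc k" by simp
  finally show ?case .
qed

lemma mat_pow_add_ge:
  assumes "finite S" "\<And>i j. i \<in> S \<Longrightarrow> 0 \<le> A i j" "l \<in> S" "j \<in> S"
  shows "mat_pow S A k i l * mat_pow S A m l j \<le> mat_pow S A (k + m) i j"
  unfolding mat_pow_add[OF assms(1,4)]
  by (rule member_le_sum) (use assms in \<open>auto intro!: mult_nonneg_nonneg mat_pow_nonneg\<close>)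

lemma mat_pow_ge_path:
  assumes "\<And>i j. i \<in> S \<Longrightarrow> 0 \<le> A i j" "finite S" "\<And>l. l < d \<Longrightarrow> p l \<in> S"
  shows "(\<Prod>l<d. A (p l) (p (Suc l))) \<le> mat_pow S A d (p 0) (p d)"
  using assms(3)
proof (induction d)
  case 0
  then show ?case by simp
next
  case (Suc d)
  have "(\<Prod>l<Suc d. A (p l) (p (Suc l))) \<le> mat_pow S A d (p 0) (p d) * A (p d) (p (Suc d))"
    using Suc assms(1) by (auto intro!: mult_right_mono)
  also have "\<dots> \<le> mat_pow S A (Suc d) (p 0) (p (Suc d))"
    unfolding mat_pow.simps using Suc.prems assms
    by (intro member_le_sum) (auto intro!: mult_nonneg_nonneg mat_pow_nonneg)
  finally show ?case .
qed

lemma sum_choose_Suc: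
  fixes X :: "nat \<Rightarrow> real"
  shows "(\<Sum>m\<le>Suc k. of_nat (Suc k choose m) * a ^ (Suc k - m) * X m)
    = (\<Sum>m\<le>k. of_nat (k choose m) * a ^ (k - m) * X (Suc m))
      + a * (\<Sum>m\<le>k. of_nat (k choose m) * a ^ (k - m) * X m)"
proof -
  have "a * (\<Sum>m\<le>k. of_nat (k choose m) * a ^ (k - m) * X m)
      = (\<Sum>m\<le>Suc k. of_nat (k choose m) * a ^ (Suc k - m) * X m)"
    unfolding sum_distrib_left by (simp add: Suc_diff_le algebra_simps)
  also have "\<dots> = a ^ Suc k * X 0 + (\<Sum>m\<le>k. of_nat (k choose Suc m) * a ^ (k - m) * X (Suc m))"
    unfolding sum.atMost_Suc_shift by simp
  finally show ?thesis
    unfolding sum.atMost_Suc_shift by (simp add: sum.distrib[symmetric] algebra_simps)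
qed

lemma mat_pow_shift_binomial:
  assumes "finite S" "j \<in> S" and B: "\<And>i j. B i j = A i j + (if i = j then c else 0)"
  shows "mat_pow S A k i j = (\<Sum>m\<le>k. of_nat (k choose m) * (-c) ^ (k - m) * mat_pow S B m i j)"
  using assms(2)
proof (induction k arbitrary: j)
  case 0
  then show ?case by simp
next
  case (Suc k)
  let ?b = "\<lambda>m l. of_nat (k choose m) * (-c) ^ (k - m) * mat_pow S B m i l"
  have "(\<Sum>l\<in>S. mat_pow S A k i l * B l j) = mat_pow S A (Suc k) i j + c * mat_pow S A k i j"
    using Suc.prems assms(1) by (simp add: B distrib_left sum.distrib mult.commute if_distrib[where f = "\<lambda>x. x * _"] cong: if_cong)
  then have "mat_pow S A (Suc k) i j = (\<Sum>l\<in>S. mat_pow S A k i l * B l j) - c * mat_pow S A k i j"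
    by simp
  also have "(\<Sum>l\<in>S. mat_pow S A k i l * B l j) = (\<Sum>l\<in>S. \<Sum>m\<le>k. ?b m l * B l j)"
    using Suc.IH by (simp add: sum_distrib_right)
  also have "\<dots> = (\<Sum>m\<le>k. of_nat (k choose m) * (-c) ^ (k - m) * mat_pow S B (Suc m) i j)"
    by (subst sum.swap) (simp add: sum_distrib_left mult.assoc)
  finally show ?case
    using Suc.IH[OF Suc.prems] sum_choose_Suc[of k "-c" "\<lambda>m. mat_pow S B m i j"] by simp
qed

definition mat_exp :: "'a set \<Rightarrow> ('a \<Rightarrow> 'a \<Rightarrow> real) \<Rightarrow> real \<Rightarrow> 'a \<Rightarrow> 'a \<Rightarrow> real" where
  "mat_exp S A t i j = (\<Sum>k. t ^ k / fact k * mat_pow S A k i j)"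

lemma trans_semigroup_eq_mat_exp: "trans_semigroup n t = mat_exp (states n) (gen n) t"
  unfolding trans_semigroup_def mat_exp_def gen_pow_eq_mat_pow ..

lemma mat_exp_uniformization:
  assumes "finite S" "j \<in> S"
    and B: "\<And>i j. B i j = A i j + (if i = j then c else 0)"
    and B_nonneg: "\<And>i j. i \<in> S \<Longrightarrow> 0 \<le> B i j" and B_le: "\<And>i j. i \<in> S \<Longrightarrow> B i j \<le> b"
  shows "summable (\<lambda>k. t ^ k / fact k * mat_pow S B k i j)"
    and "mat_exp S A t i j = exp (- c * t) * mat_exp S B t i j"
proof -
  define a where "a k = t ^ k / fact k * mat_pow S B k i j" for k
  define e where "e k = (- c * t) ^ k / fact k" for k
  have a_abs: "summable (\<lambda>k. norm (a k))"
  proof (rule summable_comparison_test'[where N = 0])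
    show "summable (\<lambda>k. inverse (fact k) * (\<bar>t\<bar> * (real (card S) * b)) ^ k)"
      by (rule summable_exp)
    fix k :: nat
    have "norm (norm (a k)) = \<bar>t\<bar> ^ k / fact k * mat_pow S B k i j"
      unfolding a_def using mat_pow_nonneg[of S B, OF B_nonneg] by (simp add: abs_mult power_abs)
    also have "\<dots> \<le> \<bar>t\<bar> ^ k / fact k * (real (card S) * b) ^ k"
      by (intro mult_left_mono mat_pow_le assms) auto
    finally show "norm (norm (a k)) \<le> inverse (fact k) * (\<bar>t\<bar> * (real (card S) * b)) ^ k"
      by (simp add: power_mult_distrib field_simps)
  qed
  then show "summable (\<lambda>k. t ^ k / fact k * mat_pow S B k i j)"
    unfolding a_def[symmetric] by (rule summable_norm_cancel)
  have e_abs: "summable (\<lambda>k. norm (e k))"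
    using summable_exp[of "\<bar>c * t\<bar>"] unfolding e_def by (simp add: power_abs field_simps)
  have e_sums: "e sums exp (- c * t)"
    using exp_converges[of "- c * t"] unfolding e_def by (simp add: divide_inverse mult.commute)
  have cauchy: "(\<lambda>k. \<Sum>m\<le>k. a m * e (k - m)) = (\<lambda>k. t ^ k / fact k * mat_pow S A k i j)"
  proof
    fix k
    have "a m * e (k - m) = t ^ k / fact k * (of_nat (k choose m) * (- c) ^ (k - m) * mat_pow S B m i j)"
      if "m \<le> k" for m
    proof -
      have "t ^ k = t ^ m * t ^ (k - m)" using that by (simp flip: power_add)
      then show ?thesis
        unfolding a_def e_def binomial_fact[OF that] power_mult_distrib by (simp add: field_simps)
    qed
    then show "(\<Sum>m\<le>k. a m * e (k - m)) = t ^ k / fact k * mat_pow S A k i j"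
      unfolding mat_pow_shift_binomial[OF assms(1,2) B] sum_distrib_left by simp
  qed
  have "(\<lambda>k. t ^ k / fact k * mat_pow S A k i j) sums (suminf a * exp (- c * t))"
    using Cauchy_product_sums[OF a_abs e_abs] e_sums unfolding cauchy by (simp add: sums_iff)
  then show "mat_exp S A t i j = exp (- c * t) * mat_exp S B t i j"
    unfolding mat_exp_def a_def by (simp add: sums_iff)
qed

lemma mat_exp_ge_uniformized_term:
  assumes "finite S" "j \<in> S" "0 \<le> t"
    and B: "\<And>i j. B i j = A i j + (if i = j then c else 0)"
    and B_nonneg: "\<And>i j. i \<in> S \<Longrightarrow> 0 \<le> B i j" and B_le: "\<And>i j. i \<in> S \<Longrightarrow> B i j \<le> b"
  shows "exp (- c * t) * (t ^ K / fact K * mat_pow S B K i j) \<le> mat_exp S A t i j"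
proof -
  have "t ^ K / fact K * mat_pow S B K i j \<le> mat_exp S B t i j"
    unfolding mat_exp_def using mat_exp_uniformization(1)[OF assms(1,2) B B_nonneg B_le]
    using mat_pow_nonneg[of S B, OF B_nonneg] \<open>0 \<le> t\<close>
    by (intro sum_le_suminf[where I = "{K}", simplified]) auto
  then have "exp (- c * t) * (t ^ K / fact K * mat_pow S B K i j) \<le> exp (- c * t) * mat_exp S B t i j"
    by (rule mult_left_mono) simp
  also have "\<dots> = mat_exp S A t i j"
    by (rule mat_exp_uniformization(2)[OF assms(1,2) B B_nonneg B_le, symmetric])
  finally show ?thesis .
qed

lemma rate_decomp:
  assumes "2 \<le> n" "i \<le> 2 * n" "k \<le> 2 * n" "k \<noteq> i"
  shows "rate n i k = (if k = Suc i then (if i = n then 1 / real n else 1) else 0)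
    + (if 0 < i \<and> k = i - 1 then inverse (2 ^ n\<^sup>2) else 0)
    + (if i = n \<and> k = 2 * n then 1 - 1 / real n else 0)
    + (if i = 2 * n \<and> k = n then (real n - 1) * inverse (2 ^ n ^ 3) else 0)"
  using assms unfolding rate_def by auto

definition exit_rate :: "nat \<Rightarrow> nat \<Rightarrow> real" where
  "exit_rate n i = (\<Sum>k\<in>states n - {i}. rate n i k)"

lemma exit_rate_eq:
  assumes "2 \<le> n" "i \<le> 2 * n"
  shows "exit_rate n i = (if i < 2 * n then (if i = n then 1 / real n else 1) else 0)
    + (if 0 < i then inverse (2 ^ n\<^sup>2) else 0)
    + (if i = n then 1 - 1 / real n else 0)
    + (if i = 2 * n then (real n - 1) * inverse (2 ^ n ^ 3) else 0)"
    (is "_ = ?rhs")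
proof -
  have "exit_rate n i = (\<Sum>k\<in>states n - {i}. (if k = Suc i then (if i = n then 1 / real n else 1) else 0)
    + (if 0 < i \<and> k = i - 1 then inverse (2 ^ n\<^sup>2) else 0)
    + (if i = n \<and> k = 2 * n then 1 - 1 / real n else 0)
    + (if i = 2 * n \<and> k = n then (real n - 1) * inverse (2 ^ n ^ 3) else 0))"
    unfolding exit_rate_def using assms by (intro sum.cong refl rate_decomp) (auto simp: states_def)
  also have "\<dots> = ?rhs"
    using assms by (simp add: sum.distrib states_def) auto
  finally show ?thesis .
qed

lemma inverse_two_power_le_half: "1 \<le> k \<Longrightarrow> inverse ((2::real) ^ k) \<le> 1 / 2"
  using power_increasing[of 1 k "2::real"] by (simp add: field_simps)

lemma pred_times_inverse_two_power_cube_le_1: "(real n - 1) * inverse ((2::real) ^ n ^ 3) \<le> 1"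
proof -
  have "n < 2 ^ n" by (rule less_exp)
  also have "(2::nat) ^ n \<le> 2 ^ n ^ 3" by (rule power_increasing) (cases n, simp_all add: power3_eq_cube)
  finally have "real n \<le> real (2 ^ n ^ 3)" by simp
  then have "real n - 1 \<le> 2 ^ n ^ 3" unfolding of_nat_power of_nat_numeral by linarith
  then show ?thesis by (simp add: field_simps)
qed

lemma rate_nonneg: "2 \<le> n \<Longrightarrow> 0 \<le> rate n i k"
  unfolding rate_def by auto

lemma rate_le_1: "2 \<le> n \<Longrightarrow> rate n i k \<le> 1"
  using pred_times_inverse_two_power_cube_le_1[of n] unfolding rate_def by (auto simp: inverse_le_1_iff)

lemma exit_rate_nonneg: "2 \<le> n \<Longrightarrow> 0 \<le> exit_rate n i"
  unfolding exit_rate_def by (intro sum_nonneg rate_nonneg)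

lemma exit_rate_le:
  assumes "2 \<le> n" "i \<le> 2 * n"
  shows "exit_rate n i \<le> (if i < 2 * n then 3 / 2 else 2)"
  using assms exit_rate_eq[OF assms] inverse_two_power_le_half[of "n\<^sup>2"]
    pred_times_inverse_two_power_cube_le_1[of n]
  by (auto simp: power2_eq_square)

lemma rate_Suc: "i < 2 * n \<Longrightarrow> rate n i (Suc i) = (if i = n then 1 / real n else 1)"
  unfolding rate_def by auto

lemma rate_Suc_pred: "2 \<le> n \<Longrightarrow> i < 2 * n \<Longrightarrow> rate n (Suc i) i = inverse (2 ^ n\<^sup>2)"
  unfolding rate_def by auto

lemma rate_eq_0:
  "j \<noteq> Suc i \<Longrightarrow> i \<noteq> Suc j \<Longrightarrow> \<not> (i = n \<and> j = 2 * n) \<Longrightarrow> \<not> (i = 2 * n \<and> j = n) \<Longrightarrow> rate n i j = 0"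
  unfolding rate_def by auto

(* Q + 2I, twice the jump kernel of the chain uniformized at rate 2. *)
definition unif_gen :: "nat \<Rightarrow> nat \<Rightarrow> nat \<Rightarrow> real" where
  "unif_gen n i j = gen n i j + (if i = j then 2 else 0)"

lemma unif_gen_diag: "unif_gen n i i = 2 - exit_rate n i"
  unfolding unif_gen_def gen_def exit_rate_def by simp

lemma unif_gen_off_diag: "i \<noteq> j \<Longrightarrow> unif_gen n i j = rate n i j"
  unfolding unif_gen_def gen_def by simp

lemma unif_gen_nonneg:
  assumes "2 \<le> n" "i \<in> states n"
  shows "0 \<le> unif_gen n i j"
  using assms exit_rate_le[of n i] unif_gen_diag[of n i] unif_gen_off_diag[of i j n] rate_nonneg[of n i j]
  by (cases "i = j") (auto simp: states_def split: if_splits)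

lemma unif_gen_le_2: "2 \<le> n \<Longrightarrow> unif_gen n i j \<le> 2"
  using exit_rate_nonneg[of n i] unif_gen_diag[of n i] unif_gen_off_diag[of i j n] rate_le_1[of n i j]
  by (cases "i = j") auto

lemma unif_gen_diag_ge_half: "2 \<le> n \<Longrightarrow> i < 2 * n \<Longrightarrow> 1 / 2 \<le> unif_gen n i i"
  using exit_rate_le[of n i] unif_gen_diag[of n i] by simp

lemma unif_gen_Suc: "i < 2 * n \<Longrightarrow> unif_gen n i (Suc i) = (if i = n then 1 / real n else 1)"
  by (simp add: unif_gen_off_diag rate_Suc)

lemma unif_gen_pred: "2 \<le> n \<Longrightarrow> i < 2 * n \<Longrightarrow> unif_gen n (Suc i) i = inverse (2 ^ n\<^sup>2)"
  by (simp add: unif_gen_off_diag rate_Suc_pred)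

abbreviation unif_pow :: "nat \<Rightarrow> nat \<Rightarrow> nat \<Rightarrow> nat \<Rightarrow> real" where
  "unif_pow n \<equiv> mat_pow (states n) (unif_gen n)"

lemma trans_semigroup_ge_unif_pow:
  assumes "2 \<le> n" "y \<in> states n" "0 \<le> t"
  shows "exp (- 2 * t) * (t ^ k / fact k * unif_pow n k x y) \<le> trans_semigroup n t x y"
  unfolding trans_semigroup_eq_mat_exp
  using assms unif_gen_nonneg[OF assms(1)] unif_gen_le_2[OF assms(1)]
  by (intro mat_exp_ge_uniformized_term[where c = 2 and b = 2]) (auto simp: unif_gen_def states_def)

lemma unif_pow_ge_path:
  assumes "2 \<le> n" "\<And>l. l < d \<Longrightarrow> p l \<le> 2 * n"
  shows "(\<Prod>l<d. unif_gen n (p l) (p (Suc l))) \<le> unif_pow n d (p 0) (p d)"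
  using assms by (intro mat_pow_ge_path unif_gen_nonneg) (auto simp: states_def)

lemma unif_pow_forward:
  assumes "2 \<le> n" "x \<le> y" "y \<le> 2 * n"
  shows "1 / real n \<le> unif_pow n (y - x) x y"
proof -
  have "1 / real n \<le> (\<Prod>l<y - x. if l = n - x then (if x \<le> n then 1 / real n else 1) else 1)"
    using assms(1) by simp
  also have "\<dots> = (\<Prod>l<y - x. unif_gen n (x + l) (x + Suc l))"
    using assms(2,3) by (intro prod.cong refl) (auto simp: unif_gen_Suc)
  also have "\<dots> \<le> unif_pow n (y - x) (x + 0) (x + (y - x))"
    using assms by (intro unif_pow_ge_path) auto
  finally show ?thesis
    using assms(2) by simp
qed

lemma unif_pow_backward:
  assumes "2 \<le> n" "y \<le> x" "x \<le> 2 * n"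
  shows "inverse (2 ^ n\<^sup>2) ^ (x - y) \<le> unif_pow n (x - y) x y"
proof -
  have "unif_gen n (x - l) (x - Suc l) = inverse (2 ^ n\<^sup>2)" if "l < x - y" for l
    using unif_gen_pred[OF assms(1), of "x - Suc l"] that assms(3) by (simp add: Suc_diff_Suc)
  then have "(\<Prod>l<x - y. unif_gen n (x - l) (x - Suc l)) = inverse (2 ^ n\<^sup>2) ^ (x - y)"
    by simp
  then show ?thesis
    using unif_pow_ge_path[OF assms(1), of "x - y" "\<lambda>l. x - l"] assms by simp
qed

lemma unif_pow_loop:
  assumes "2 \<le> n" "i < 2 * n"
  shows "(1 / 2) ^ m \<le> unif_pow n m i i"
proof -
  have "(1 / 2) ^ m \<le> (\<Prod>l<m. unif_gen n i i)"
    using unif_gen_diag_ge_half[OF assms] by (simp add: power_mono)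
  then show ?thesis
    using unif_pow_ge_path[OF assms(1), of m "\<lambda>_. i"] assms by simp
qed

lemma unif_pow_2n_ge:
  assumes "2 \<le> n" "x < 2 * n" "y < 2 * n"
  shows "1 / real n * (1 / 4) ^ n * inverse (2 ^ n\<^sup>2) ^ (2 * n - 1 - y) \<le> unif_pow n (2 * n) x y"
proof -
  define \<epsilon> :: real where "\<epsilon> = inverse (2 ^ n\<^sup>2)"
  have \<epsilon>: "0 \<le> \<epsilon>" "\<epsilon> \<le> 1"
    unfolding \<epsilon>_def by (auto simp: inverse_le_1_iff)
  define a where "a = 1 / real n * \<epsilon> ^ (2 * n - 1 - y)"
  have "0 \<le> \<epsilon> ^ (2 * n - 1 - y)" "\<epsilon> ^ (2 * n - 1 - y) \<le> 1"
    using \<epsilon> by (auto intro: power_le_one)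
  then have a: "0 \<le> a" "a \<le> 1 / real n" "a \<le> \<epsilon> ^ (2 * n - 1 - y)"
    unfolding a_def using assms(1)
    by (auto intro: divide_right_mono divide_left_mono[of 1 "real n" _, simplified])
  obtain d where d: "d \<le> 2 * n" "a \<le> unif_pow n d x y"
  proof (cases "x \<le> y")
    case True
    then show ?thesis
      using that[of "y - x"] a unif_pow_forward[OF assms(1) True] assms(3) by simp
  next
    case False
    have "\<epsilon> ^ (2 * n - 1 - y) \<le> \<epsilon> ^ (x - y)"
      using \<epsilon> assms(2) by (intro power_decreasing) auto
    then show ?thesis
      using that[of "x - y"] a unif_pow_backward[OF assms(1), of y x] False assms(2)
      unfolding \<epsilon>_def by simp
  qed
  have "(1 / 4) ^ n = ((1 / 2) ^ (2 * n) :: real)"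
    by (simp add: power_mult power2_eq_square)
  also have "\<dots> \<le> (1 / 2) ^ (2 * n - d)"
    by (intro power_decreasing) auto
  finally have "a * (1 / 4) ^ n \<le> unif_pow n d x y * unif_pow n (2 * n - d) y y"
    using d(2) a(1) unif_pow_loop[OF assms(1,3), of "2 * n - d"] by (intro mult_mono) auto
  also have "\<dots> \<le> unif_pow n (2 * n) x y"
    using mat_pow_add_ge[of "states n" "unif_gen n" y y d x "2 * n - d"] unif_gen_nonneg[OF assms(1)]
      assms d(1) by (simp add: states_def)
  finally show ?thesis
    unfolding a_def \<epsilon>_def by (simp add: ac_simps)
qed

(* The unnormalized reversible measure: along the path v_0 ... v_2n each weight is the previous
   one times the ratio of forward to backward rate. *)
definition db_weight :: "nat \<Rightarrow> nat \<Rightarrow> real" where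
  "db_weight n i = (if i \<le> n then 1 else 1 / real n) * (2 ^ n\<^sup>2) ^ i"

lemma db_weight_pos: "2 \<le> n \<Longrightarrow> 0 < db_weight n i"
  unfolding db_weight_def by simp

lemma db_weight_Suc: "db_weight n (Suc i) = db_weight n i * (if i = n then 1 / real n else 1) * 2 ^ n\<^sup>2"
  unfolding db_weight_def by auto

lemma db_weight_detailed_balance:
  assumes n: "2 \<le> n"
  shows "db_weight n i * rate n i j = db_weight n j * rate n j i"
proof -
  have path: "db_weight n k * rate n k (Suc k) = db_weight n (Suc k) * rate n (Suc k) k" for k
  proof (cases "k < 2 * n")
    case True
    then show ?thesis
      by (simp add: rate_Suc rate_Suc_pred[OF n] db_weight_Suc field_simps)
  next
    case False
    then show ?thesis by (simp add: rate_def)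
  qed
  have shortcut: "db_weight n n * rate n n (2 * n) = db_weight n (2 * n) * rate n (2 * n) n"
  proof -
    define r :: real where "r = 2 ^ n\<^sup>2"
    have "0 < r" unfolding r_def by simp
    moreover have "2 ^ n ^ 3 = r ^ n"
      unfolding r_def by (simp flip: power_mult add: power2_eq_square power3_eq_cube)
    moreover have "db_weight n n = r ^ n" "db_weight n (2 * n) = r ^ n * r ^ n / real n"
      unfolding db_weight_def r_def using n by (simp_all add: mult_2 power_add)
    ultimately show ?thesis
      using n unfolding rate_def by (simp add: field_simps)
  qed
  consider "j = Suc i" | "i = Suc j" | "i = n \<and> j = 2 * n" | "i = 2 * n \<and> j = n"
    | "rate n i j = 0" "rate n j i = 0"
    using rate_eq_0[of j i n] rate_eq_0[of i j n] by blast
  then show ?thesis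
    by cases (use path[of i] path[of j] shortcut in auto)
qed

definition is_rev_stat_dist :: "nat \<Rightarrow> (nat \<Rightarrow> real) \<Rightarrow> bool" where
  "is_rev_stat_dist n p \<longleftrightarrow> (\<forall>i. i \<notin> states n \<longrightarrow> p i = 0)
     \<and> (\<forall>i\<in>states n. p i \<ge> 0)
     \<and> (\<Sum>i\<in>states n. p i) = 1
     \<and> (\<forall>j\<in>states n. (\<Sum>i\<in>states n. p i * gen n i j) = 0)
     \<and> (\<forall>i\<in>states n. \<forall>j\<in>states n. p i * rate n i j = p j * rate n j i)"

lemma stationary_if_detailed_balance:
  assumes db: "\<And>i j. i \<in> states n \<Longrightarrow> j \<in> states n \<Longrightarrow> p i * rate n i j = p j * rate n j i"
    and j: "j \<in> states n"
  shows "(\<Sum>i\<in>states n. p i * gen n i j) = 0"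
proof -
  have "(\<Sum>i\<in>states n. p i * gen n i j) = p j * gen n j j + (\<Sum>i\<in>states n - {j}. p i * rate n i j)"
    using j by (simp add: sum.remove[of _ j] states_def gen_def)
  also have "(\<Sum>i\<in>states n - {j}. p i * rate n i j) = p j * (\<Sum>i\<in>states n - {j}. rate n j i)"
    using db j by (simp add: sum_distrib_left)
  finally show ?thesis by (simp add: gen_def)
qed

lemma rev_stat_dist_eq_weight:
  assumes n: "2 \<le> n" and p: "is_rev_stat_dist n p"
  shows "i \<le> 2 * n \<Longrightarrow> p i = p 0 * db_weight n i"
proof (induction i)
  case 0
  then show ?case by (simp add: db_weight_def)
next
  case (Suc i)
  then have "i < 2 * n" by simp
  moreover have "p i * rate n i (Suc i) = p (Suc i) * rate n (Suc i) i"
    using p Suc.prems unfolding is_rev_stat_dist_def states_def by auto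
  ultimately show ?case
    using Suc.IH by (simp add: rate_Suc rate_Suc_pred[OF n] db_weight_Suc field_simps split: if_splits)
qed

lemma ex1_rev_stat_dist:
  assumes n: "2 \<le> n"
  shows "\<exists>!p. is_rev_stat_dist n p"
proof
  define Z where "Z = (\<Sum>i\<in>states n. db_weight n i)"
  have Z: "0 < Z"
    unfolding Z_def using db_weight_pos[OF n] by (intro sum_pos) (auto simp: states_def)
  define q where "q i = (if i \<in> states n then db_weight n i / Z else 0)" for i
  have db: "q i * rate n i j = q j * rate n j i" if "i \<in> states n" "j \<in> states n" for i j
    unfolding q_def using that db_weight_detailed_balance[OF n, of i j] by (simp add: field_simps)
  have "(\<Sum>i\<in>states n. q i) = 1"
    using Z unfolding q_def Z_def by (simp flip: sum_divide_distrib)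
  then show "is_rev_stat_dist n q"
    unfolding is_rev_stat_dist_def
    using db stationary_if_detailed_balance[of n q] Z db_weight_pos[OF n]
    by (simp add: q_def less_imp_le)
  fix p
  assume p: "is_rev_stat_dist n p"
  have "1 = (\<Sum>i\<in>states n. p i)"
    using p unfolding is_rev_stat_dist_def by simp
  also have "\<dots> = p 0 * Z"
    unfolding Z_def sum_distrib_left
    by (intro sum.cong refl rev_stat_dist_eq_weight[OF n p]) (simp add: states_def)
  finally have "p 0 = 1 / Z"
    using Z by (simp add: field_simps)
  show "p = q"
  proof
    fix i
    show "p i = q i"
      using rev_stat_dist_eq_weight[OF n p, of i] \<open>p 0 = 1 / Z\<close> p
      by (cases "i \<in> states n") (simp_all add: q_def is_rev_stat_dist_def states_def)
  qed
qed

lemma stat_dist_le: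
  assumes n: "2 \<le> n" and y: "y \<le> 2 * n"
  shows "stat_dist n y \<le> real n * inverse (2 ^ n\<^sup>2) ^ (2 * n - y)"
proof -
  define p where "p = stat_dist n"
  define r :: real where "r = 2 ^ n\<^sup>2"
  have r: "1 \<le> r"
    unfolding r_def by simp
  have p: "is_rev_stat_dist n p"
    unfolding p_def stat_dist_def is_rev_stat_dist_def[symmetric] using ex1_rev_stat_dist[OF n] by (rule theI')
  then have "p (2 * n) \<le> (\<Sum>i\<in>states n. p i)"
    unfolding is_rev_stat_dist_def by (intro member_le_sum) (auto simp: states_def)
  then have "p 0 * db_weight n (2 * n) \<le> 1"
    using p rev_stat_dist_eq_weight[OF n p, of "2 * n"] unfolding is_rev_stat_dist_def by simp
  then have "p 0 \<le> real n / (r ^ y * r ^ (2 * n - y))"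
    using n y r unfolding db_weight_def r_def by (simp add: field_simps flip: power_add)
  moreover have "db_weight n y \<le> r ^ y"
    unfolding db_weight_def r_def using n by auto
  moreover have "0 \<le> p 0"
    using p unfolding is_rev_stat_dist_def states_def by auto
  ultimately have "p 0 * db_weight n y \<le> real n / (r ^ y * r ^ (2 * n - y)) * r ^ y"
    using db_weight_pos[OF n, of y] by (intro mult_mono) auto
  also have "\<dots> = real n * inverse r ^ (2 * n - y)"
    using r by (simp add: field_simps power_inverse)
  finally show ?thesis
    using rev_stat_dist_eq_weight[OF n p y] unfolding p_def r_def by simp
qed

lemma square_mult_power_le_two_power_square:
  assumes "18 \<le> n"
  shows "n\<^sup>2 * (64 * 729) ^ n \<le> (2::nat) ^ n\<^sup>2"
proof -
  have "n\<^sup>2 \<le> (2 ^ n)\<^sup>2"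
    using less_exp[of n] by (intro power_mono) auto
  moreover have "(64 * 729::nat) ^ n \<le> (2 ^ 16) ^ n"
    by (intro power_mono) auto
  ultimately have "n\<^sup>2 * (64 * 729) ^ n \<le> (2 ^ n)\<^sup>2 * (2 ^ 16) ^ n"
    by (rule mult_mono) auto
  also have "\<dots> = 2 ^ (n * 2 + 16 * n)"
    by (simp only: power_add power_mult)
  also have "\<dots> = 2 ^ (18 * n)"
    by simp
  also have "\<dots> \<le> 2 ^ n\<^sup>2"
    using assms by (intro power_increasing) (auto simp: power2_eq_square)
  finally show ?thesis .
qed

lemma two_power_square_dominates:
  assumes n: "18 \<le> n" and t: "real n / 2 \<le> t" "t \<le> 3 * real n"
  shows "real n * inverse (2 ^ n\<^sup>2) \<le> exp (- 2 * t) * (t ^ (2 * n) / fact (2 * n)) * (1 / real n * (1 / 4) ^ n)"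
proof -
  define A where "A = (real n / 2) ^ (2 * n)"
  have "0 < A"
    unfolding A_def using n by simp
  have fact_le: "fact (2 * n) \<le> 16 ^ n * A"
  proof -
    have "fact (2 * n) \<le> real (2 * n) ^ (2 * n)"
      using fact_le_power[of "2 * n", where 'a = real] by simp
    also have "\<dots> = (4 * (real n / 2)) ^ (2 * n)"
      by simp
    also have "\<dots> = 16 ^ n * A"
      unfolding A_def power_mult_distrib by (simp add: power_mult)
    finally show ?thesis .
  qed
  have exp_ge: "1 / 729 ^ n \<le> exp (- 2 * t)"
  proof -
    have "exp (6 * real n) = exp 1 ^ (6 * n)"
      by (simp flip: exp_of_nat_mult)
    also have "\<dots> \<le> 3 ^ (6 * n)"
      by (intro power_mono exp_le) simp
    also have "\<dots> = 729 ^ n"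
      by (simp add: power_mult)
    finally have "1 / 729 ^ n \<le> exp (- (6 * real n))"
      by (simp add: exp_minus field_simps)
    also have "\<dots> \<le> exp (- 2 * t)"
      using t by simp
    finally show ?thesis .
  qed
  have "real (n\<^sup>2 * (64 * 729) ^ n) \<le> real (2 ^ n\<^sup>2)"
    using square_mult_power_le_two_power_square[OF n] by (simp only: of_nat_le_iff)
  then have bound: "real n * real n * 64 ^ n * 729 ^ n \<le> 2 ^ n\<^sup>2"
    unfolding of_nat_mult of_nat_power power_mult_distrib by (simp add: power2_eq_square)
  have "real n * real n * fact (2 * n) * 4 ^ n \<le> real n * real n * (16 ^ n * A) * 4 ^ n"
    using fact_le by (intro mult_right_mono mult_left_mono) auto
  also have "\<dots> = (real n * real n * 64 ^ n * 729 ^ n) * (1 / 729 ^ n * A)"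
    by (simp add: field_simps flip: power_mult_distrib)
  also have "\<dots> \<le> 2 ^ n\<^sup>2 * (1 / 729 ^ n * A)"
    using bound \<open>0 < A\<close> by (intro mult_right_mono) auto
  also have "\<dots> \<le> 2 ^ n\<^sup>2 * (exp (- 2 * t) * t ^ (2 * n))"
    using exp_ge t \<open>0 < A\<close> unfolding A_def by (intro mult_left_mono mult_mono power_mono) auto
  finally show ?thesis
    using n by (simp add: field_simps power_one_over)
qed

theorem lemma3p5:
  shows "\<exists>N. \<forall>n\<ge>N. n \<ge> 2 \<longrightarrow>
           (\<forall>x\<in>states n - {2*n}. \<forall>y\<in>states n - {2*n}. \<forall>t::real.
              real n / 2 \<le> t \<and> t \<le> 3 * real n \<longrightarrow> trans_semigroup n t x y \<ge> stat_dist n y)"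
proof (intro exI[of _ 18] allI impI ballI)
  fix n x y :: nat and t :: real
  assume "18 \<le> n" "2 \<le> n" and x: "x \<in> states n - {2 * n}" and y: "y \<in> states n - {2 * n}"
    and t: "real n / 2 \<le> t \<and> t \<le> 3 * real n"
  have "x < 2 * n" "y < 2 * n" "y \<in> states n" "0 \<le> t"
    using x y t by (auto simp: states_def)
  define \<epsilon> :: real where "\<epsilon> = inverse (2 ^ n\<^sup>2)"
  define K where "K = exp (- 2 * t) * (t ^ (2 * n) / fact (2 * n))"
  have "stat_dist n y \<le> real n * \<epsilon> * \<epsilon> ^ (2 * n - 1 - y)"
    using stat_dist_le[OF \<open>2 \<le> n\<close>, of y] \<open>y < 2 * n\<close>
    by (simp add: \<epsilon>_def Suc_diff_Suc mult.assoc flip: power_Suc)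
  also have "\<dots> \<le> K * (1 / real n * (1 / 4) ^ n) * \<epsilon> ^ (2 * n - 1 - y)"
    using two_power_square_dominates[OF \<open>18 \<le> n\<close>] t unfolding K_def \<epsilon>_def by (intro mult_right_mono) auto
  also have "\<dots> = K * (1 / real n * (1 / 4) ^ n * \<epsilon> ^ (2 * n - 1 - y))"
    by (simp only: mult.assoc)
  also have "\<dots> \<le> K * unif_pow n (2 * n) x y"
    using unif_pow_2n_ge[OF \<open>2 \<le> n\<close> \<open>x < 2 * n\<close> \<open>y < 2 * n\<close>] \<open>0 \<le> t\<close>
    unfolding K_def \<epsilon>_def by (intro mult_left_mono) auto
  also have "\<dots> \<le> trans_semigroup n t x y"
    unfolding K_def mult.assoc by (rule trans_semigroup_ge_unif_pow) fact+
  finally show "stat_dist n y \<le> trans_semigroup n t x y" .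
qed

end
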